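(* The function $$q_\intercal(x',\tau,\xi')=\int_{\mathbb R}\frac{\theta\!\left(\dfrac{p(x',0,\tau,\xi)}{1+\xi_n^2+|\xi'|^2_{x'}+\tau^2}\right)}{p(x',0,\tau,\xi)}\,d\xi_n,\qquad \xi=(\xi',\xi_n),$$ belongs to the symbol class $\mathsf S^{-1}(\mathbb R_t\times\mathbb R^{n-1}_{x'})$ (Hörmander class $S^{-1}_{1,0}$ in the variables $(t,x')$ with dual variables $(\tau,\xi')$).
   Context: Let $\alpha^{ij}$ ($1\le i,j\le n-1$) be real, symmetric, smooth functions on $\mathbb R^n$ with bounded derivatives of all orders, with $\xi_n^2+\sum\alpha^{ij}(x)\xi_i\xi_j$ uniformly elliptic. Write $|\xi'|^2_x=\sum_{i,j\le n-1}\alpha^{ij}(x)\xi_i\xi_j$, $|\xi'|_{x'}=|\xi'|_{(x',0)}$, and $p(x,\tau,\xi)=-\tau^2+\xi_n^2+|\xi'|^2_x$. Fix $\theta\in\mathscr C^\infty(\mathbb R,[0,1])$ with $\theta(\sigma)=1$ for $\sigma\ge1/5$ and $\theta(\sigma)=0$ for $\sigma\le1/10$ (so the integrand vanishes wherever $p\le0$). *)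

theory Defs
  imports "HOL-Analysis.Analysis"
begin

definition dpartial :: "'a::real_normed_vector \<Rightarrow> ('a \<Rightarrow> real) \<Rightarrow> 'a \<Rightarrow> real" where
  "dpartial v f x = deriv (\<lambda>s. f (x + s *\<^sub>R v)) 0"

fun iter_partial :: "'a::real_normed_vector list \<Rightarrow> ('a \<Rightarrow> real) \<Rightarrow> 'a \<Rightarrow> real" where
  "iter_partial [] f = f"
| "iter_partial (v # vs) f = dpartial v (iter_partial vs f)"

definition smooth_fun :: "('a::euclidean_space \<Rightarrow> real) \<Rightarrow> bool" where
  "smooth_fun f \<longleftrightarrow> (\<forall>vs. set vs \<subseteq> Basis \<longrightarrow> (\<forall>x. iter_partial vs f differentiable (at x)))"

definition bounded_derivs :: "('a::euclidean_space \<Rightarrow> real) \<Rightarrow> bool" where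
  "bounded_derivs f \<longleftrightarrow> (\<forall>vs. set vs \<subseteq> Basis \<longrightarrow> bounded (range (iter_partial vs f)))"

text \<open>Basis vectors of 'a x 'a are (b,0) (z-directions) and (0,b) (zeta-directions).\<close>
definition symbol_class :: "real \<Rightarrow> ('a::euclidean_space \<Rightarrow> 'a \<Rightarrow> real) \<Rightarrow> bool" where
  "symbol_class m a \<longleftrightarrow>
     smooth_fun (\<lambda>w. a (fst w) (snd w)) \<and>
     (\<forall>vs. set vs \<subseteq> (Basis :: ('a \<times> 'a) set) \<longrightarrow>
        (\<exists>C. \<forall>z \<zeta>. \<bar>iter_partial vs (\<lambda>w. a (fst w) (snd w)) (z, \<zeta>)\<bar>
                 \<le> C * (1 + norm \<zeta>) powr (m - real (length (filter (\<lambda>v. fst v = 0) vs)))))"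

text \<open>Points of R^n are written (x', x_n) with x' in R^(n-1) = real^'m.
  metric_sq alpha x xi' = |xi'|^2_x = sum_{i,j} alpha^{ij}(x) xi_i xi_j.\<close>
definition metric_sq :: "('m::finite \<Rightarrow> 'm \<Rightarrow> ((real^'m) \<times> real) \<Rightarrow> real) \<Rightarrow> (real^'m) \<times> real \<Rightarrow> real^'m \<Rightarrow> real" where
  "metric_sq \<alpha> x \<xi>' = (\<Sum>i\<in>UNIV. \<Sum>j\<in>UNIV. \<alpha> i j x * \<xi>' $ i * \<xi>' $ j)"

definition p_bdry :: "('m::finite \<Rightarrow> 'm \<Rightarrow> ((real^'m) \<times> real) \<Rightarrow> real) \<Rightarrow> real^'m \<Rightarrow> real \<Rightarrow> real^'m \<Rightarrow> real \<Rightarrow> real" where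
  "p_bdry \<alpha> x' \<tau> \<xi>' \<xi>n = \<xi>n^2 + metric_sq \<alpha> (x', 0) \<xi>' - \<tau>^2"

definition q_T :: "('m::finite \<Rightarrow> 'm \<Rightarrow> ((real^'m) \<times> real) \<Rightarrow> real) \<Rightarrow> (real \<Rightarrow> real) \<Rightarrow> real^'m \<Rightarrow> real \<Rightarrow> real^'m \<Rightarrow> real" where
  "q_T \<alpha> \<theta> x' \<tau> \<xi>' = (LINT \<xi>n|lborel.
      \<theta> (p_bdry \<alpha> x' \<tau> \<xi>' \<xi>n / (1 + \<xi>n^2 + metric_sq \<alpha> (x', 0) \<xi>' + \<tau>^2)) / p_bdry \<alpha> x' \<tau> \<xi>' \<xi>n)"

end

theory Submission
  imports Defs "HOL-Probability.Sinc_Integral"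
begin

text \<open>With \<open>P = \<xi>\<^sub>n\<^sup>2 + |\<xi>'|\<^sup>2\<^sub>x\<^sub>' - \<tau>\<^sup>2\<close> and \<open>W = 1 + \<xi>\<^sub>n\<^sup>2 + |\<xi>'|\<^sup>2\<^sub>x\<^sub>' + \<tau>\<^sup>2\<close>,
  the integrand is \<open>\<Phi>(P/W) W\<^sup>-\<^sup>1\<close> where \<open>\<Phi>(\<sigma>) = \<theta>(\<sigma>)/\<sigma>\<close> is smooth because \<open>\<theta>\<close> vanishes
  for \<open>\<sigma> \<le> 1/10\<close>. Since \<open>P\<close> and \<open>W\<close> are quadratic in the dual variables with coefficients
  having bounded derivatives, \<open>W\<close> is elliptic and \<open>|P/W| \<le> 1\<close>, the integrand is a symbol of
  order \<open>-2\<close> in the joint variable \<open>(\<tau>, \<xi>', \<xi>\<^sub>n)\<close>, uniformly in \<open>(t, x')\<close>: such symbols are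
  closed under products, inverses of elliptic elements and composition with smooth functions.
  Integrating \<open>\<langle>\<tau>, \<xi>', \<xi>\<^sub>n\<rangle>\<^sup>-\<^sup>2\<^sup>-\<^sup>j\<close> over \<open>\<xi>\<^sub>n\<close> gives \<open>O(\<langle>\<tau>, \<xi>'\<rangle>\<^sup>-\<^sup>1\<^sup>-\<^sup>j)\<close>, and
  differentiation under the integral sign is justified by a second-order Taylor bound on the
  integrand that is integrable in \<open>\<xi>\<^sub>n\<close>.\<close>

declare split_paired_All[simp del] split_paired_Ex[simp del]

lemma dpartial_eq_derivative:
  assumes "(f has_derivative D) (at x)"
  shows "dpartial v f x = D v"
proof -
  have "((\<lambda>s. x + s *\<^sub>R v) has_derivative (\<lambda>s. s *\<^sub>R v)) (at 0)"
    by (auto intro!: derivative_eq_intros)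
  moreover have "(f has_derivative D) (at (x + 0 *\<^sub>R v))" using assms by simp
  ultimately have "((\<lambda>s. f (x + s *\<^sub>R v)) has_derivative (\<lambda>s. D (s *\<^sub>R v))) (at 0)"
    using has_derivative_compose[of "\<lambda>s. x + s *\<^sub>R v" _ 0 UNIV f D] by (simp add: o_def)
  moreover have "(\<lambda>s. D (s *\<^sub>R v)) = (*) (D v)"
    using has_derivative_linear[OF assms] by (auto simp add: linear_scale)
  ultimately have "((\<lambda>s. f (x + s *\<^sub>R v)) has_real_derivative D v) (at 0)"
    by (simp add: has_field_derivative_def)
  then show ?thesis unfolding dpartial_def by (rule DERIV_imp_deriv)
qed

lemma dpartial_frechet_derivative:
  "f differentiable (at x) \<Longrightarrow> dpartial v f x = frechet_derivative f (at x) v"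
  by (rule dpartial_eq_derivative[OF frechet_derivative_works[THEN iffD1]])

lemma has_derivative_sum_dpartial:
  fixes f :: "'a::euclidean_space \<Rightarrow> real"
  assumes "(f has_derivative D) (at x)"
  shows "(f has_derivative (\<lambda>u. \<Sum>b\<in>Basis. (u \<bullet> b) * dpartial b f x)) (at x)"
proof -
  have "D u = (\<Sum>b\<in>Basis. (u \<bullet> b) * dpartial b f x)" for u
  proof -
    have "D u = D (\<Sum>b\<in>Basis. (u \<bullet> b) *\<^sub>R b)" by (simp add: euclidean_representation)
    also have "\<dots> = (\<Sum>b\<in>Basis. (u \<bullet> b) * D b)"
      using has_derivative_linear[OF assms] by (simp add: linear_sum linear_scale)
    finally show ?thesis using dpartial_eq_derivative[OF assms] by simp
  qed
  then have "D = (\<lambda>u. \<Sum>b\<in>Basis. (u \<bullet> b) * dpartial b f x)" by auto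
  then show ?thesis using assms by simp
qed

lemma dpartial_const [simp]: "dpartial v (\<lambda>x. c) x = 0"
  unfolding dpartial_def by simp

lemma dpartial_zero_direction [simp]: "dpartial 0 f x = 0"
  unfolding dpartial_def by simp

lemma sum_Basis_inner_mult:
  fixes v :: "'a::euclidean_space"
  assumes "v \<in> Basis"
  shows "(\<Sum>b\<in>Basis. (v \<bullet> b) * F b) = F v"
proof -
  have "(\<Sum>b\<in>Basis. (v \<bullet> b) * F b) = (\<Sum>b\<in>Basis. if b = v then F b else 0)"
    by (rule sum.cong) (use assms in \<open>auto simp: inner_Basis\<close>)
  also have "\<dots> = F v" using assms by (simp add: sum.delta')
  finally show ?thesis .
qed

lemma iter_partial_append: "iter_partial (vs @ ws) f = iter_partial vs (iter_partial ws f)"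
  by (induction vs) auto

lemma smooth_fun_dpartial: "smooth_fun f \<Longrightarrow> b \<in> Basis \<Longrightarrow> smooth_fun (dpartial b f)"
  unfolding smooth_fun_def
proof (intro allI impI)
  fix vs :: "'a list" and x
  assume "\<forall>vs. set vs \<subseteq> Basis \<longrightarrow> (\<forall>x. iter_partial vs f differentiable (at x))"
    and "b \<in> Basis" and "set vs \<subseteq> Basis"
  then have "iter_partial (vs @ [b]) f differentiable (at x)" by simp
  then show "iter_partial vs (dpartial b f) differentiable (at x)" by (simp add: iter_partial_append)
qed

lemma bounded_derivs_dpartial: "bounded_derivs f \<Longrightarrow> b \<in> Basis \<Longrightarrow> bounded_derivs (dpartial b f)"
  unfolding bounded_derivs_def
proof (intro allI impI)
  fix vs :: "'a list"
  assume "\<forall>vs. set vs \<subseteq> Basis \<longrightarrow> bounded (range (iter_partial vs f))"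
    and "b \<in> Basis" and "set vs \<subseteq> Basis"
  then have "bounded (range (iter_partial (vs @ [b]) f))" by simp
  then show "bounded (range (iter_partial vs (dpartial b f)))" by (simp add: iter_partial_append)
qed

lemma smooth_fun_differentiable: "smooth_fun f \<Longrightarrow> f differentiable (at x)"
  unfolding smooth_fun_def by (metis empty_subsetI iter_partial.simps(1) set_empty)

lemma bounded_derivs_bounded: "bounded_derivs f \<Longrightarrow> \<exists>B. \<forall>x. \<bar>f x\<bar> \<le> B"
  unfolding bounded_derivs_def bounded_real
  by (metis empty_subsetI iter_partial.simps(1) rangeI set_empty)

definition bracket :: "'a::euclidean_space \<times> 'b::euclidean_space \<Rightarrow> real \<Rightarrow> real" where
  "bracket w s = sqrt (1 + s^2 + (norm (snd w))^2)"

text \<open>A point \<open>w = (z, \<zeta>)\<close> pairs the base variables with the dual ones; the basis vectors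
  with vanishing first component are the \<open>\<zeta>\<close>-directions, whose derivatives lower the order.\<close>
definition dual_deg :: "'a::euclidean_space \<times> 'b::euclidean_space \<Rightarrow> real" where
  "dual_deg v = (if fst v = 0 then 1 else 0)"

definition wpartial :: "'a::euclidean_space \<times> 'b::euclidean_space \<Rightarrow> ('a \<times> 'b \<Rightarrow> real \<Rightarrow> real) \<Rightarrow> 'a \<times> 'b \<Rightarrow> real \<Rightarrow> real" where
  "wpartial v f = (\<lambda>w s. dpartial v (\<lambda>w. f w s) w)"

text \<open>\<open>param_symbol n k f\<close>: \<open>f (z, \<zeta>) s\<close> is a symbol of order \<open>k\<close> in the joint dual variable
  \<open>(\<zeta>, s)\<close>, uniformly in \<open>z\<close>, for derivatives of order \<open>\<le> n\<close> in \<open>(z, \<zeta>)\<close> only.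
  No \<open>s\<close>-derivatives are needed because \<open>s\<close> is integrated out.\<close>
fun param_symbol :: "nat \<Rightarrow> real \<Rightarrow> ('a::euclidean_space \<times> 'b::euclidean_space \<Rightarrow> real \<Rightarrow> real) \<Rightarrow> bool" where
  "param_symbol 0 k f \<longleftrightarrow>
     (\<forall>w. f w \<in> borel_measurable borel) \<and> (\<exists>C. \<forall>w s. \<bar>f w s\<bar> \<le> C * bracket w s powr k)"
| "param_symbol (Suc n) k f \<longleftrightarrow>
     param_symbol 0 k f \<and> (\<forall>w s. (\<lambda>w. f w s) differentiable (at w)) \<and>
     (\<forall>v\<in>Basis. param_symbol n (k - dual_deg v) (wpartial v f))"

declare param_symbol.simps(1) [simp del]

lemma bracket_ge_1: "bracket w s \<ge> 1"
  unfolding bracket_def by simp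

lemma bracket_pos: "bracket w s > 0"
  using bracket_ge_1[of w s] by linarith

lemma bracket_nonzero [simp]: "bracket w s \<noteq> 0"
  using bracket_pos[of w s] by linarith

lemma abs_bracket [simp]: "\<bar>bracket w s\<bar> = bracket w s"
  using bracket_pos[of w s] by simp

lemma bracket_squared: "(bracket w s)^2 = 1 + s^2 + (norm (snd w))^2"
  unfolding bracket_def by (simp add: add_nonneg_nonneg)

lemma bracket_powr_minus_2: "bracket w s powr (-2) = inverse ((bracket w s)^2)"
  by (simp add: powr_minus less_imp_le[OF bracket_pos])

lemma dual_deg_nonneg: "dual_deg v \<ge> 0"
  unfolding dual_deg_def by simp

lemma param_symbol_0_bound:
  assumes "param_symbol 0 k f"
  shows "\<exists>C\<ge>0. \<forall>w s. \<bar>f w s\<bar> \<le> C * bracket w s powr k"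
proof -
  obtain C where C: "\<And>w s. \<bar>f w s\<bar> \<le> C * bracket w s powr k"
    using assms unfolding param_symbol.simps(1) by blast
  have "\<bar>f w s\<bar> \<le> max C 0 * bracket w s powr k" for w s
    using C[of w s] mult_right_mono[OF max.cobounded1 powr_ge_zero] by (meson order_trans)
  then show ?thesis by (intro exI[of _ "max C 0"]) simp
qed

lemma param_symbol_0I:
  "(\<And>w. f w \<in> borel_measurable borel) \<Longrightarrow> (\<And>w s. \<bar>f w s\<bar> \<le> C * bracket w s powr k)
    \<Longrightarrow> param_symbol 0 k f"
  unfolding param_symbol.simps(1) by blast

lemma param_symbol_imp_0: "param_symbol n k f \<Longrightarrow> param_symbol 0 k f"
  by (cases n) auto

lemma param_symbol_Suc_imp: "param_symbol (Suc n) k f \<Longrightarrow> param_symbol n k f"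
proof (induction n arbitrary: k f)
  case 0 then show ?case by simp
next
  case (Suc n) then show ?case by simp
qed

lemma param_symbol_0_mono:
  assumes "param_symbol 0 k f" "k \<le> k'"
  shows "param_symbol 0 k' f"
proof -
  obtain C where C: "C \<ge> 0" "\<forall>w s. \<bar>f w s\<bar> \<le> C * bracket w s powr k"
    using param_symbol_0_bound[OF assms(1)] by blast
  have "\<bar>f w s\<bar> \<le> C * bracket w s powr k'" for w s
  proof -
    have "bracket w s powr k \<le> bracket w s powr k'"
      using powr_mono[OF assms(2) bracket_ge_1] .
    then show ?thesis using C mult_left_mono[OF _ C(1)] by (meson order_trans)
  qed
  moreover have "f w \<in> borel_measurable borel" for w
    using assms(1) unfolding param_symbol.simps(1) by blast
  ultimately show ?thesis by (intro param_symbol_0I)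
qed

lemma param_symbol_mono: "param_symbol n k f \<Longrightarrow> k \<le> k' \<Longrightarrow> param_symbol n k' f"
proof (induction n arbitrary: k k' f)
  case 0
  then show ?case by (rule param_symbol_0_mono)
next
  case (Suc n)
  have "param_symbol n (k' - dual_deg v) (wpartial v f)" if "v \<in> Basis" for v
  proof (rule Suc.IH)
    show "param_symbol n (k - dual_deg v) (wpartial v f)" using Suc.prems(1) that by simp
  qed (use Suc.prems(2) in simp)
  moreover have "param_symbol 0 k' f"
    using param_symbol_0_mono[of k f k'] Suc.prems by simp
  ultimately show ?case using Suc.prems unfolding param_symbol.simps(2) by blast
qed

lemma wpartial_const: "wpartial v (\<lambda>w s. c s) = (\<lambda>w s. 0)"
  unfolding wpartial_def by simp

lemma param_symbol_zero: "param_symbol n k (\<lambda>w s. 0)"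
  by (induction n arbitrary: k) (auto intro: param_symbol_0I[where C = 0] simp: wpartial_const)

lemma param_symbol_const: "param_symbol n 0 (\<lambda>w s. c)"
  by (cases n) (auto intro: param_symbol_0I[where C = "\<bar>c\<bar>"] param_symbol_zero simp: wpartial_const)

lemma wpartial_add:
  assumes "\<forall>w s. (\<lambda>w. f w s) differentiable (at w)" "\<forall>w s. (\<lambda>w. g w s) differentiable (at w)"
  shows "wpartial v (\<lambda>w s. f w s + g w s) = (\<lambda>w s. wpartial v f w s + wpartial v g w s)"
proof (intro ext)
  fix w s
  have f: "((\<lambda>w. f w s) has_derivative frechet_derivative (\<lambda>w. f w s) (at w)) (at w)"
    and g: "((\<lambda>w. g w s) has_derivative frechet_derivative (\<lambda>w. g w s) (at w)) (at w)"
    using assms frechet_derivative_works by blast+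
  show "wpartial v (\<lambda>w s. f w s + g w s) w s = wpartial v f w s + wpartial v g w s"
    unfolding wpartial_def
    by (simp add: dpartial_eq_derivative[OF f] dpartial_eq_derivative[OF g]
        dpartial_eq_derivative[OF has_derivative_add[OF f g]])
qed

lemma wpartial_mult:
  assumes "\<forall>w s. (\<lambda>w. f w s) differentiable (at w)" "\<forall>w s. (\<lambda>w. g w s) differentiable (at w)"
  shows "wpartial v (\<lambda>w s. f w s * g w s) = (\<lambda>w s. wpartial v f w s * g w s + f w s * wpartial v g w s)"
proof (intro ext)
  fix w s
  have f: "((\<lambda>w. f w s) has_derivative frechet_derivative (\<lambda>w. f w s) (at w)) (at w)"
    and g: "((\<lambda>w. g w s) has_derivative frechet_derivative (\<lambda>w. g w s) (at w)) (at w)"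
    using assms frechet_derivative_works by blast+
  show "wpartial v (\<lambda>w s. f w s * g w s) w s = wpartial v f w s * g w s + f w s * wpartial v g w s"
    unfolding wpartial_def
    by (simp add: dpartial_eq_derivative[OF f] dpartial_eq_derivative[OF g]
        dpartial_eq_derivative[OF has_derivative_mult[OF f g]])
qed

lemma param_symbol_0_add:
  assumes "param_symbol 0 k f" "param_symbol 0 k g"
  shows "param_symbol 0 k (\<lambda>w s. f w s + g w s)"
proof -
  obtain C D where C: "\<And>w s. \<bar>f w s\<bar> \<le> C * bracket w s powr k"
    and D: "\<And>w s. \<bar>g w s\<bar> \<le> D * bracket w s powr k"
    using assms unfolding param_symbol.simps(1) by blast
  have "\<bar>f w s + g w s\<bar> \<le> (C + D) * bracket w s powr k" for w s
    using abs_triangle_ineq[of "f w s" "g w s"] C[of w s] D[of w s] by (simp add: distrib_right)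
  moreover have "(\<lambda>s. f w s + g w s) \<in> borel_measurable borel" for w
    using assms unfolding param_symbol.simps(1) by (blast intro: borel_measurable_add)
  ultimately show ?thesis by (intro param_symbol_0I)
qed

lemma param_symbol_0_mult:
  assumes "param_symbol 0 a f" "param_symbol 0 b g"
  shows "param_symbol 0 (a + b) (\<lambda>w s. f w s * g w s)"
proof -
  obtain C where C: "C \<ge> 0" "\<And>w s. \<bar>f w s\<bar> \<le> C * bracket w s powr a"
    using param_symbol_0_bound[OF assms(1)] by blast
  obtain D where D: "D \<ge> 0" "\<And>w s. \<bar>g w s\<bar> \<le> D * bracket w s powr b"
    using param_symbol_0_bound[OF assms(2)] by blast
  have "\<bar>f w s * g w s\<bar> \<le> (C * D) * bracket w s powr (a + b)" for w s
  proof -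
    have "\<bar>f w s * g w s\<bar> \<le> (C * bracket w s powr a) * (D * bracket w s powr b)"
      unfolding abs_mult using C D by (intro mult_mono) auto
    then show ?thesis by (simp add: powr_add mult_ac)
  qed
  moreover have "(\<lambda>s. f w s * g w s) \<in> borel_measurable borel" for w
    using assms unfolding param_symbol.simps(1) by (blast intro: borel_measurable_times)
  ultimately show ?thesis by (intro param_symbol_0I)
qed

lemma param_symbol_add:
  "param_symbol n k f \<Longrightarrow> param_symbol n k g \<Longrightarrow> param_symbol n k (\<lambda>w s. f w s + g w s)"
proof (induction n arbitrary: k f g)
  case 0
  then show ?case by (rule param_symbol_0_add)
next
  case (Suc n)
  have df: "\<forall>w s. (\<lambda>w. f w s) differentiable (at w)" and dg: "\<forall>w s. (\<lambda>w. g w s) differentiable (at w)"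
    using Suc.prems by simp_all
  have "param_symbol 0 k (\<lambda>w s. f w s + g w s)"
    using Suc.prems by (intro param_symbol_0_add) simp_all
  moreover have "\<forall>v\<in>Basis. param_symbol n (k - dual_deg v) (wpartial v (\<lambda>w s. f w s + g w s))"
    unfolding wpartial_add[OF df dg] using Suc.prems by (intro ballI Suc.IH) simp_all
  moreover have "\<forall>w s. (\<lambda>w. f w s + g w s) differentiable (at w)"
    using df dg by (simp add: differentiable_add)
  ultimately show ?case unfolding param_symbol.simps(2) by blast
qed

lemma param_symbol_mult:
  "param_symbol n a f \<Longrightarrow> param_symbol n b g \<Longrightarrow> param_symbol n (a + b) (\<lambda>w s. f w s * g w s)"
proof (induction n arbitrary: a b f g)
  case 0
  then show ?case by (rule param_symbol_0_mult)
next
  case (Suc n)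
  have df: "\<forall>w s. (\<lambda>w. f w s) differentiable (at w)" and dg: "\<forall>w s. (\<lambda>w. g w s) differentiable (at w)"
    using Suc.prems by simp_all
  have "param_symbol n (a + b - dual_deg v) (wpartial v (\<lambda>w s. f w s * g w s))" if v: "v \<in> Basis" for v
  proof -
    have f: "param_symbol n a f" and g: "param_symbol n b g"
      using Suc.prems param_symbol_Suc_imp by blast+
    have f': "param_symbol n (a - dual_deg v) (wpartial v f)"
      and g': "param_symbol n (b - dual_deg v) (wpartial v g)"
      using Suc.prems v by simp_all
    have "param_symbol n (a + b - dual_deg v) (\<lambda>w s. wpartial v f w s * g w s)"
      using Suc.IH[OF f' g] by (simp add: algebra_simps)
    moreover have "param_symbol n (a + b - dual_deg v) (\<lambda>w s. f w s * wpartial v g w s)"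
      using Suc.IH[OF f g'] by (simp add: algebra_simps)
    ultimately show ?thesis
      unfolding wpartial_mult[OF df dg] by (rule param_symbol_add)
  qed
  moreover have "param_symbol 0 (a + b) (\<lambda>w s. f w s * g w s)"
    using Suc.prems by (intro param_symbol_0_mult) simp_all
  moreover have "\<forall>w s. (\<lambda>w. f w s * g w s) differentiable (at w)"
    using df dg by (simp add: differentiable_mult)
  ultimately show ?case unfolding param_symbol.simps(2) by blast
qed

lemma param_symbol_sum:
  "finite I \<Longrightarrow> (\<And>i. i \<in> I \<Longrightarrow> param_symbol n k (f i)) \<Longrightarrow> param_symbol n k (\<lambda>w s. \<Sum>i\<in>I. f i w s)"
proof (induction I rule: finite_induct)
  case empty
  then show ?case using param_symbol_zero by simp
next
  case (insert i I)
  then show ?case using param_symbol_add[of n k "f i"] by simp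
qed

lemma param_symbol_scale: "param_symbol n k f \<Longrightarrow> param_symbol n k (\<lambda>w s. c * f w s)"
  using param_symbol_mult[OF param_symbol_const] by simp

lemma param_symbol_inverse:
  assumes "c > 0" and lower: "\<forall>w s. W w s \<ge> c * (bracket w s)^2"
  shows "param_symbol n 2 W \<Longrightarrow> param_symbol n (-2) (\<lambda>w s. inverse (W w s))"
proof (induction n)
  case 0
  have "\<bar>inverse (W w s)\<bar> \<le> inverse c * bracket w s powr (-2)" for w s
  proof -
    have pos: "c * (bracket w s)^2 > 0" using \<open>c > 0\<close> bracket_pos[of w s] by simp
    then have "inverse (W w s) \<le> inverse (c * (bracket w s)^2)"
      using lower by (simp add: le_imp_inverse_le del: inverse_mult_distrib)
    moreover have "W w s > 0" using pos lower by (meson less_le_trans)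
    ultimately show ?thesis by (simp add: bracket_powr_minus_2 inverse_mult_distrib)
  qed
  moreover have "(\<lambda>s. inverse (W w s)) \<in> borel_measurable borel" for w
    using "0" unfolding param_symbol.simps(1) by (blast intro: borel_measurable_inverse)
  ultimately show ?case by (intro param_symbol_0I)
next
  case (Suc n)
  have nonzero: "W w s \<noteq> 0" for w s
    using lower \<open>c > 0\<close> bracket_pos[of w s] by (metis mult_pos_pos zero_less_power less_le_trans less_irrefl)
  have dW: "((\<lambda>w. W w s) has_derivative frechet_derivative (\<lambda>w. W w s) (at w)) (at w)" for w s
    using Suc.prems frechet_derivative_works by auto
  have inv: "((\<lambda>w. inverse (W w s)) has_derivative
      (\<lambda>h. - (inverse (W w s) * frechet_derivative (\<lambda>w. W w s) (at w) h * inverse (W w s)))) (at w)" for w s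
    by (rule Deriv.has_derivative_inverse[OF nonzero dW])
  have IH: "param_symbol n (-2) (\<lambda>w s. inverse (W w s))"
    using Suc param_symbol_Suc_imp by blast
  have "param_symbol n (-2 - dual_deg v) (wpartial v (\<lambda>w s. inverse (W w s)))" if v: "v \<in> Basis" for v
  proof -
    have "wpartial v (\<lambda>w s. inverse (W w s)) = (\<lambda>w s. (-1) * wpartial v W w s * (inverse (W w s) * inverse (W w s)))"
      unfolding wpartial_def by (intro ext) (simp add: dpartial_eq_derivative[OF dW] dpartial_eq_derivative[OF inv])
    moreover have "param_symbol n (2 - dual_deg v + (-2 + -2))
        (\<lambda>w s. (-1) * wpartial v W w s * (inverse (W w s) * inverse (W w s)))"
      using Suc.prems v by (intro param_symbol_mult param_symbol_scale IH) simp
    ultimately show ?thesis by simp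
  qed
  moreover have "\<forall>w s. (\<lambda>w. inverse (W w s)) differentiable (at w)"
    using inv differentiableI by blast
  ultimately show ?case using param_symbol_imp_0[OF IH] unfolding param_symbol.simps(2) by blast
qed

lemma param_symbol_dual_var: "param_symbol n 1 (\<lambda>w s. s)"
proof -
  have "\<bar>s\<bar> \<le> 1 * bracket w s powr 1" for w s
  proof -
    have "\<bar>s\<bar> = sqrt (s^2)" by simp
    also have "\<dots> \<le> bracket w s" unfolding bracket_def by (intro real_sqrt_le_mono) simp
    finally show ?thesis by simp
  qed
  then have "param_symbol 0 1 (\<lambda>w s. s)" by (intro param_symbol_0I) simp
  then show ?thesis by (cases n) (simp_all add: wpartial_const param_symbol_zero)
qed

lemma param_symbol_inner_dual:
  fixes c :: "'b::euclidean_space"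
  shows "param_symbol n 1 (\<lambda>(w :: 'a::euclidean_space \<times> 'b) s. snd w \<bullet> c)"
proof -
  have "\<bar>snd w \<bullet> c\<bar> \<le> norm c * bracket w s powr 1" for w s
  proof -
    have "\<bar>snd w \<bullet> c\<bar> \<le> norm (snd w) * norm c" by (rule Cauchy_Schwarz_ineq2)
    also have "norm (snd w) = sqrt ((norm (snd w))^2)" by simp
    also have "\<dots> \<le> bracket w s" unfolding bracket_def by (intro real_sqrt_le_mono) simp
    finally show ?thesis by (simp add: mult.commute mult_right_mono)
  qed
  then have zero: "param_symbol 0 1 (\<lambda>w s. snd w \<bullet> c)" by (intro param_symbol_0I) simp
  have D: "((\<lambda>w. snd w \<bullet> c) has_derivative (\<lambda>h. snd h \<bullet> c)) (at w)" for w :: "'a \<times> 'b"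
    by (auto intro!: derivative_eq_intros)
  have "param_symbol m (1 - dual_deg v) (wpartial v (\<lambda>w s. snd w \<bullet> c))"
    if v: "v \<in> Basis" for m and v :: "'a \<times> 'b"
  proof -
    have "wpartial v (\<lambda>w s. snd w \<bullet> c) = (\<lambda>w s. snd v \<bullet> c)"
      unfolding wpartial_def by (intro ext) (simp add: dpartial_eq_derivative[OF D])
    moreover have "fst v = 0 \<or> snd v = 0" using v by (auto simp: Basis_prod_def)
    ultimately show ?thesis
      using param_symbol_const[of m "snd v \<bullet> c"] param_symbol_zero[of m]
      by (auto simp: dual_deg_def)
  qed
  then show ?thesis using zero differentiableI[OF D] by (cases n) auto
qed

lemma param_symbol_compose_linear:
  fixes L :: "'a::euclidean_space \<times> 'b::euclidean_space \<Rightarrow> 'c::euclidean_space"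
  assumes "linear L" and L_Basis: "\<forall>v\<in>Basis. L v = 0 \<or> (fst v \<noteq> 0 \<and> L v \<in> Basis)"
  shows "smooth_fun \<beta> \<Longrightarrow> bounded_derivs \<beta> \<Longrightarrow> param_symbol n 0 (\<lambda>w s. \<beta> (L w))"
proof (induction n arbitrary: \<beta>)
  case 0
  obtain B where "\<forall>x. \<bar>\<beta> x\<bar> \<le> B" using bounded_derivs_bounded[OF "0.prems"(2)] ..
  then show ?case by (intro param_symbol_0I[where C = B]) simp_all
next
  case (Suc n)
  obtain B where B: "\<forall>x. \<bar>\<beta> x\<bar> \<le> B" using bounded_derivs_bounded[OF Suc.prems(2)] ..
  have d\<beta>: "\<beta> differentiable (at x)" for x
    using smooth_fun_differentiable[OF Suc.prems(1)] .
  have D: "((\<lambda>w. \<beta> (L w)) has_derivative (\<lambda>h. frechet_derivative \<beta> (at (L w)) (L h))) (at w)" for w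
    using has_derivative_compose[OF linear_imp_has_derivative[OF \<open>linear L\<close>]
        frechet_derivative_works[THEN iffD1, OF d\<beta>]]
    by (simp add: o_def)
  have "param_symbol n (0 - dual_deg v) (wpartial v (\<lambda>w s. \<beta> (L w)))" if v: "v \<in> Basis" for v
  proof -
    have wp: "wpartial v (\<lambda>w s. \<beta> (L w)) = (\<lambda>w s. dpartial (L v) \<beta> (L w))"
      unfolding wpartial_def
      by (intro ext) (simp add: dpartial_eq_derivative[OF D] dpartial_frechet_derivative[OF d\<beta>])
    show ?thesis
    proof (cases "L v = 0")
      case True
      then show ?thesis using param_symbol_zero by (simp add: wp)
    next
      case False
      then have "fst v \<noteq> 0" "L v \<in> Basis" using L_Basis v by auto
      then show ?thesis
        using Suc.IH[OF smooth_fun_dpartial[OF Suc.prems(1)] bounded_derivs_dpartial[OF Suc.prems(2)]]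
        by (simp add: wp dual_deg_def)
    qed
  qed
  moreover have "param_symbol 0 0 (\<lambda>w s. \<beta> (L w))"
    using B by (intro param_symbol_0I[where C = B]) simp_all
  ultimately show ?case using differentiableI[OF D] by simp
qed

fun times_differentiable_on :: "nat \<Rightarrow> (real \<Rightarrow> real) \<Rightarrow> real set \<Rightarrow> bool" where
  "times_differentiable_on 0 f S \<longleftrightarrow> True"
| "times_differentiable_on (Suc n) f S \<longleftrightarrow>
     (\<forall>x\<in>S. f differentiable (at x)) \<and> times_differentiable_on n (deriv f) S"

lemma times_differentiable_on_Suc_imp:
  "times_differentiable_on (Suc n) f S \<Longrightarrow> times_differentiable_on n f S"
  by (induction n arbitrary: f) auto

lemma times_differentiable_on_Un:
  "times_differentiable_on n f S \<Longrightarrow> times_differentiable_on n f T \<Longrightarrow> times_differentiable_on n f (S \<union> T)"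
  by (induction n arbitrary: f) auto

lemma times_differentiable_on_cong:
  "open S \<Longrightarrow> (\<And>x. x \<in> S \<Longrightarrow> f x = g x) \<Longrightarrow> times_differentiable_on n f S \<Longrightarrow> times_differentiable_on n g S"
proof (induction n arbitrary: f g)
  case 0 then show ?case by simp
next
  case (Suc n)
  have "g differentiable (at x)" if "x \<in> S" for x
  proof -
    have "f differentiable (at x)" using Suc.prems(3) that by simp
    then obtain D where "(f has_derivative D) (at x)" unfolding differentiable_def by blast
    then have "(g has_derivative D) (at x)"
      using has_derivative_transform_within_open[of f D x UNIV S g] Suc.prems(1,2) that by auto
    then show ?thesis unfolding differentiable_def by blast
  qed
  moreover have "deriv f x = deriv g x" if "x \<in> S" for x
  proof -
    have "eventually (\<lambda>y. f y = g y) (nhds x)"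
      using Suc.prems(1,2) that by (auto simp: eventually_nhds)
    then show ?thesis by (rule deriv_cong_ev) simp
  qed
  ultimately show ?case using Suc.IH[of "deriv f" "deriv g"] Suc.prems by simp
qed

lemma times_differentiable_on_const: "times_differentiable_on n (\<lambda>x. c) S"
proof (induction n arbitrary: c)
  case 0 then show ?case by simp
next
  case (Suc n)
  have "deriv (\<lambda>x. c) = (\<lambda>x. 0)" by (intro ext DERIV_imp_deriv) simp
  then show ?case using Suc.IH[of 0] by simp
qed

lemma times_differentiable_on_add:
  "open S \<Longrightarrow> times_differentiable_on n f S \<Longrightarrow> times_differentiable_on n g S
    \<Longrightarrow> times_differentiable_on n (\<lambda>x. f x + g x) S"
proof (induction n arbitrary: f g)
  case 0 then show ?case by simp
next
  case (Suc n)
  have "deriv f x + deriv g x = deriv (\<lambda>x. f x + g x) x" if "x \<in> S" for x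
    using Suc.prems that
    by (intro DERIV_imp_deriv[symmetric] derivative_intros) (auto simp: DERIV_deriv_iff_real_differentiable)
  moreover have "times_differentiable_on n (\<lambda>x. deriv f x + deriv g x) S"
    using Suc.prems by (intro Suc.IH[OF Suc.prems(1)]) simp_all
  ultimately have "times_differentiable_on n (deriv (\<lambda>x. f x + g x)) S"
    by (rule times_differentiable_on_cong[OF Suc.prems(1)])
  then show ?case using Suc.prems by auto
qed

lemma times_differentiable_on_mult:
  "open S \<Longrightarrow> times_differentiable_on n f S \<Longrightarrow> times_differentiable_on n g S
    \<Longrightarrow> times_differentiable_on n (\<lambda>x. f x * g x) S"
proof (induction n arbitrary: f g)
  case 0 then show ?case by simp
next
  case (Suc n)
  have "deriv f x * g x + f x * deriv g x = deriv (\<lambda>x. f x * g x) x" if "x \<in> S" for x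
  proof -
    have "(f has_real_derivative deriv f x) (at x)" "(g has_real_derivative deriv g x) (at x)"
      using Suc.prems that by (simp_all add: DERIV_deriv_iff_real_differentiable)
    then show ?thesis by (intro DERIV_imp_deriv[symmetric]) (auto intro!: derivative_eq_intros)
  qed
  moreover have "times_differentiable_on n (\<lambda>x. deriv f x * g x + f x * deriv g x) S"
  proof -
    have f: "times_differentiable_on n f S" and g: "times_differentiable_on n g S"
      using Suc.prems times_differentiable_on_Suc_imp by blast+
    have f': "times_differentiable_on n (deriv f) S" and g': "times_differentiable_on n (deriv g) S"
      using Suc.prems by simp_all
    show ?thesis
      by (rule times_differentiable_on_add[OF \<open>open S\<close> Suc.IH[OF \<open>open S\<close> f' g] Suc.IH[OF \<open>open S\<close> f g']])
  qed
  ultimately have "times_differentiable_on n (deriv (\<lambda>x. f x * g x)) S"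
    by (rule times_differentiable_on_cong[OF Suc.prems(1)])
  then show ?case using Suc.prems by auto
qed

lemma times_differentiable_on_inverse: "times_differentiable_on n inverse {0<..}"
proof (induction n)
  case 0 then show ?case by simp
next
  case (Suc n)
  have "(-1) * (inverse x * inverse x) = deriv inverse x" if "x \<in> {0::real<..}" for x
    using that by (intro DERIV_imp_deriv[symmetric]) (auto intro!: derivative_eq_intros simp: power2_eq_square)
  moreover have "times_differentiable_on n (\<lambda>x. (-1) * (inverse x * inverse x)) {0<..}"
    by (rule times_differentiable_on_mult[OF open_greaterThan times_differentiable_on_const
          times_differentiable_on_mult[OF open_greaterThan Suc.IH Suc.IH]])
  ultimately have "times_differentiable_on n (deriv inverse) {0<..}"
    by (rule times_differentiable_on_cong[OF open_greaterThan])
  moreover have "inverse differentiable (at x)" if "x \<in> {0::real<..}" for x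
    using that differentiableI[OF has_derivative_inverse'[of x]] by simp
  ultimately show ?case by simp
qed

lemma smooth_fun_times_differentiable_on:
  fixes \<theta> :: "real \<Rightarrow> real"
  assumes "smooth_fun \<theta>"
  shows "times_differentiable_on n \<theta> S"
proof -
  have "times_differentiable_on n (iter_partial (replicate k 1) \<theta>) S" for k
  proof (induction n arbitrary: k)
    case 0 then show ?case by simp
  next
    case (Suc n)
    have diff: "iter_partial (replicate j 1) \<theta> differentiable (at x)" for j x
      using assms unfolding smooth_fun_def by (simp add: set_replicate_conv_if)
    have "deriv (iter_partial (replicate k 1) \<theta>) = iter_partial (replicate (Suc k) 1) \<theta>"
    proof
      fix x
      show "deriv (iter_partial (replicate k 1) \<theta>) x = iter_partial (replicate (Suc k) 1) \<theta> x"
        using dpartial_eq_derivative[OF diff[unfolded DERIV_deriv_iff_real_differentiable[symmetric]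
              has_field_derivative_def]]
        by simp
    qed
    then show ?case using Suc.IH[of "Suc k"] diff by simp
  qed
  from this[of 0] show ?thesis by simp
qed

lemma times_differentiable_on_cutoff_quotient:
  fixes \<theta> :: "real \<Rightarrow> real"
  assumes "smooth_fun \<theta>" "\<epsilon> > 0" "\<forall>\<sigma>. \<sigma> \<le> \<epsilon> \<longrightarrow> \<theta> \<sigma> = 0"
  shows "times_differentiable_on n (\<lambda>\<sigma>. \<theta> \<sigma> / \<sigma>) UNIV"
proof -
  have "times_differentiable_on n (\<lambda>\<sigma>. \<theta> \<sigma> * inverse \<sigma>) {0<..}"
    by (rule times_differentiable_on_mult[OF open_greaterThan
          smooth_fun_times_differentiable_on[OF assms(1)] times_differentiable_on_inverse])
  then have pos: "times_differentiable_on n (\<lambda>\<sigma>. \<theta> \<sigma> / \<sigma>) {0<..}"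
    by (simp add: divide_inverse)
  have "times_differentiable_on n (\<lambda>\<sigma>. \<theta> \<sigma> / \<sigma>) {..<\<epsilon>}"
    by (rule times_differentiable_on_cong[OF open_lessThan _ times_differentiable_on_const]) (use assms(3) in auto)
  then have "times_differentiable_on n (\<lambda>\<sigma>. \<theta> \<sigma> / \<sigma>) ({0<..} \<union> {..<\<epsilon>})"
    by (rule times_differentiable_on_Un[OF pos])
  moreover have "{0<..} \<union> {..<\<epsilon>} = UNIV" using \<open>\<epsilon> > 0\<close> by auto
  ultimately show ?thesis by simp
qed

lemma param_symbol_0_compose:
  assumes "\<forall>x. \<Phi> differentiable (at x)" "param_symbol 0 0 r" "\<forall>w s. \<bar>r w s\<bar> \<le> 1"
  shows "param_symbol 0 0 (\<lambda>w s. \<Phi> (r w s))"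
proof -
  have cont: "continuous_on UNIV \<Phi>"
    using assms(1) by (intro differentiable_imp_continuous_on) (simp add: differentiable_on_def differentiable_at_withinI)
  have "compact (\<Phi> ` {-1..1})"
    by (rule compact_continuous_image) (auto intro: continuous_on_subset[OF cont])
  then obtain B where B: "\<forall>y\<in>\<Phi> ` {-1..1}. \<bar>y\<bar> \<le> B"
    using compact_imp_bounded bounded_real by meson
  have "\<bar>\<Phi> (r w s)\<bar> \<le> B * bracket w s powr 0" for w s
    using B assms(3) by (auto simp: abs_le_iff)
  moreover have "(\<lambda>s. \<Phi> (r w s)) \<in> borel_measurable borel" for w
    using assms(2) measurable_compose[OF _ borel_measurable_continuous_onI[OF cont]]
    unfolding param_symbol.simps(1) by blast
  ultimately show ?thesis by (intro param_symbol_0I)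
qed

lemma param_symbol_compose:
  "times_differentiable_on (Suc n) \<Phi> UNIV \<Longrightarrow> param_symbol n 0 r \<Longrightarrow> \<forall>w s. \<bar>r w s\<bar> \<le> 1
    \<Longrightarrow> param_symbol n 0 (\<lambda>w s. \<Phi> (r w s))"
proof (induction n arbitrary: \<Phi>)
  case 0
  have "\<forall>x. \<Phi> differentiable (at x)" using "0.prems"(1) by simp
  then show ?case using "0.prems"(2,3) by (rule param_symbol_0_compose)
next
  case (Suc n)
  have d\<Phi>: "\<forall>x. \<Phi> differentiable (at x)" using Suc.prems(1) by simp
  have dr: "\<forall>w s. (\<lambda>w. r w s) differentiable (at w)" using Suc.prems(2) by simp
  have chain: "((\<lambda>w. \<Phi> (r w s)) has_derivative
      (\<lambda>h. deriv \<Phi> (r w s) * frechet_derivative (\<lambda>w. r w s) (at w) h)) (at w)" for w s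
  proof -
    have r: "((\<lambda>w. r w s) has_derivative frechet_derivative (\<lambda>w. r w s) (at w)) (at w)"
      using dr frechet_derivative_works by blast
    have "(\<Phi> has_derivative (*) (deriv \<Phi> (r w s))) (at (r w s))"
      using d\<Phi> by (simp add: DERIV_deriv_iff_real_differentiable[symmetric] has_field_derivative_def)
    from has_derivative_compose[OF r this] show ?thesis by simp
  qed
  have "param_symbol n (0 - dual_deg v) (wpartial v (\<lambda>w s. \<Phi> (r w s)))" if v: "v \<in> Basis" for v
  proof -
    have "wpartial v (\<lambda>w s. \<Phi> (r w s)) = (\<lambda>w s. deriv \<Phi> (r w s) * wpartial v r w s)"
      unfolding wpartial_def
      by (intro ext) (simp add: dpartial_eq_derivative[OF chain] dpartial_frechet_derivative dr)
    moreover have "param_symbol n 0 (\<lambda>w s. deriv \<Phi> (r w s))"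
    proof (rule Suc.IH)
      show "times_differentiable_on (Suc n) (deriv \<Phi>) UNIV" using Suc.prems(1) by simp
      show "param_symbol n 0 r" using Suc.prems(2) by (rule param_symbol_Suc_imp)
    qed (use Suc.prems(3) in simp)
    moreover have "param_symbol n (0 - dual_deg v) (wpartial v r)"
      using Suc.prems(2) v by simp
    ultimately show ?thesis using param_symbol_mult[of n 0] by simp
  qed
  moreover have "param_symbol 0 0 (\<lambda>w s. \<Phi> (r w s))"
    using d\<Phi> param_symbol_imp_0[OF Suc.prems(2)] Suc.prems(3) by (rule param_symbol_0_compose)
  moreover have "\<forall>w s. (\<lambda>w. \<Phi> (r w s)) differentiable (at w)"
    using differentiableI[OF chain] by blast
  ultimately show ?case unfolding param_symbol.simps(2) by blast
qed

lemma onorm_sum_Basis_le: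
  fixes c :: "'a::euclidean_space \<Rightarrow> real"
  assumes "\<forall>b\<in>Basis. \<bar>c b\<bar> \<le> M"
  shows "onorm (\<lambda>u::'a. \<Sum>b\<in>Basis. (u \<bullet> b) * c b) \<le> real DIM('a) * M"
proof (rule onorm_le)
  fix u :: 'a
  have "norm (\<Sum>b\<in>Basis. (u \<bullet> b) * c b) \<le> (\<Sum>b\<in>Basis. \<bar>(u \<bullet> b) * c b\<bar>)"
    using norm_sum[of "\<lambda>b. (u \<bullet> b) * c b" Basis] by simp
  also have "\<dots> \<le> (\<Sum>b\<in>(Basis::'a set). norm u * M)"
  proof (rule sum_mono)
    fix b :: 'a assume b: "b \<in> Basis"
    show "\<bar>(u \<bullet> b) * c b\<bar> \<le> norm u * M"
      unfolding abs_mult using Basis_le_norm[OF b] assms b by (intro mult_mono) auto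
  qed
  finally show "norm (\<Sum>b\<in>Basis. (u \<bullet> b) * c b) \<le> real DIM('a) * M * norm u" by (simp add: mult_ac)
qed

lemma abs_diff_le_of_dpartial_bound:
  fixes h :: "'a::euclidean_space \<Rightarrow> real"
  assumes "\<forall>x. h differentiable (at x)" and "\<forall>x. \<forall>b\<in>Basis. \<bar>dpartial b h x\<bar> \<le> M"
  shows "\<bar>h y - h x\<bar> \<le> (real DIM('a) * M) * norm (y - x)"
proof -
  have "(h has_derivative (\<lambda>u. \<Sum>b\<in>Basis. (u \<bullet> b) * dpartial b h z)) (at z within UNIV)" for z
    using has_derivative_sum_dpartial[OF frechet_derivative_works[THEN iffD1, OF assms(1)[rule_format]]] by simp
  from differentiable_bound[OF convex_UNIV this onorm_sum_Basis_le] assms(2)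
  show ?thesis by simp
qed

lemma taylor_remainder_dpartial_le:
  fixes h :: "'a::euclidean_space \<Rightarrow> real"
  assumes d: "\<forall>x. h differentiable (at x)"
    and d2: "\<forall>b\<in>Basis. \<forall>x. dpartial b h differentiable (at x)"
    and M: "\<forall>b\<in>Basis. \<forall>c\<in>Basis. \<forall>x. \<bar>dpartial c (dpartial b h) x\<bar> \<le> M"
  shows "\<bar>h (w + u) - h w - (\<Sum>b\<in>Basis. (u \<bullet> b) * dpartial b h w)\<bar>
    \<le> (real DIM('a) * (real DIM('a) * M)) * (norm u)^2"
proof -
  define \<phi> where "\<phi> x = h x - (\<Sum>b\<in>Basis. ((x - w) \<bullet> b) * dpartial b h w)" for x
  define D where "D x = (\<lambda>v. \<Sum>b\<in>Basis. (v \<bullet> b) * (dpartial b h x - dpartial b h w))" for x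
  have "M \<ge> 0"
    using M by (meson SOME_Basis abs_ge_zero order_trans)
  have "(\<phi> has_derivative D x) (at x within cball w (norm u))" for x
  proof -
    have "(h has_derivative (\<lambda>v. \<Sum>b\<in>Basis. (v \<bullet> b) * dpartial b h x)) (at x)"
      by (rule has_derivative_sum_dpartial[OF frechet_derivative_works[THEN iffD1, OF d[rule_format]]])
    then have "(\<phi> has_derivative (\<lambda>v. (\<Sum>b\<in>Basis. (v \<bullet> b) * dpartial b h x)
        - (\<Sum>b\<in>Basis. (v \<bullet> b) * dpartial b h w))) (at x)"
      unfolding \<phi>_def by (auto intro!: derivative_eq_intros)
    moreover have "(\<lambda>v. (\<Sum>b\<in>Basis. (v \<bullet> b) * dpartial b h x) - (\<Sum>b\<in>Basis. (v \<bullet> b) * dpartial b h w)) = D x"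
      unfolding D_def by (auto simp: sum_subtractf[symmetric] right_diff_distrib)
    ultimately show ?thesis by (auto intro: has_derivative_at_withinI)
  qed
  moreover have "onorm (D x) \<le> real DIM('a) * (real DIM('a) * M * norm u)" if "x \<in> cball w (norm u)" for x
    unfolding D_def
  proof (rule onorm_sum_Basis_le, intro ballI)
    fix b :: 'a assume b: "b \<in> Basis"
    have "\<bar>dpartial b h x - dpartial b h w\<bar> \<le> (real DIM('a) * M) * norm (x - w)"
      by (rule abs_diff_le_of_dpartial_bound) (use d2 b M in auto)
    also have "\<dots> \<le> (real DIM('a) * M) * norm u"
      using that \<open>M \<ge> 0\<close> by (intro mult_left_mono) (auto simp: dist_norm norm_minus_commute)
    finally show "\<bar>dpartial b h x - dpartial b h w\<bar> \<le> real DIM('a) * M * norm u" .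
  qed
  ultimately have "norm (\<phi> (w + u) - \<phi> w) \<le> (real DIM('a) * (real DIM('a) * M * norm u)) * norm ((w + u) - w)"
    by (intro differentiable_bound[OF convex_cball]) (auto simp: dist_norm)
  moreover have "\<phi> (w + u) - \<phi> w = h (w + u) - h w - (\<Sum>b\<in>Basis. (u \<bullet> b) * dpartial b h w)"
    unfolding \<phi>_def by simp
  ultimately show ?thesis by (simp add: power2_eq_square mult_ac)
qed

lemma has_derivative_of_quadratic_remainder:
  assumes "bounded_linear D" "K \<ge> 0" and remainder: "\<And>u. norm (F (x + u) - F x - D u) \<le> K * (norm u)^2"
  shows "(F has_derivative D) (at x)"
  unfolding has_derivative_at_alt
proof (intro conjI allI impI assms(1))
  fix e :: real assume "e > 0"
  show "\<exists>d>0. \<forall>y. norm (y - x) < d \<longrightarrow> norm (F y - F x - D (y - x)) \<le> e * norm (y - x)"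
  proof (intro exI[of _ "e / (K + 1)"] conjI allI impI)
    show "e / (K + 1) > 0" using \<open>e > 0\<close> \<open>K \<ge> 0\<close> by simp
    fix y assume y: "norm (y - x) < e / (K + 1)"
    have "K * norm (y - x) \<le> e"
    proof -
      have "K * norm (y - x) \<le> K * (e / (K + 1))" using y \<open>K \<ge> 0\<close> by (intro mult_left_mono) auto
      also have "\<dots> \<le> e" using \<open>e > 0\<close> \<open>K \<ge> 0\<close> by (simp add: field_simps)
      finally show ?thesis .
    qed
    then have "K * (norm (y - x))^2 \<le> e * norm (y - x)"
      by (simp add: power2_eq_square mult_right_mono mult.assoc[symmetric])
    then show "norm (F y - F x - D (y - x)) \<le> e * norm (y - x)"
      using remainder[of "y - x"] by simp
  qed
qed

lemma lborel_integrable_inverse_1_plus_square: "integrable lborel (\<lambda>s::real. inverse (1 + s^2))"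
proof -
  have "einterval (-\<infinity>) \<infinity> = (UNIV :: real set)" by (auto simp: einterval_iff)
  then show ?thesis
    using integrable_inverse_1_plus_square by (simp add: set_integrable_def)
qed

lemma param_symbol_0_le_inverse_1_plus_square:
  assumes "param_symbol 0 k f" "k \<le> -2"
  shows "\<exists>C\<ge>0. \<forall>w s. \<bar>f w s\<bar> \<le> C * inverse (1 + s^2)"
proof -
  obtain C where C: "C \<ge> 0" "\<forall>w s. \<bar>f w s\<bar> \<le> C * bracket w s powr k"
    using param_symbol_0_bound[OF assms(1)] by blast
  have "bracket w s powr k \<le> inverse (1 + s^2)" for w s
  proof -
    have "bracket w s powr k \<le> bracket w s powr (-2)"
      by (rule powr_mono[OF assms(2) bracket_ge_1])
    also have "\<dots> \<le> inverse (1 + s^2)"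
      unfolding bracket_powr_minus_2 bracket_squared by (intro le_imp_inverse_le) (auto simp: add_pos_nonneg)
    finally show ?thesis .
  qed
  then have "\<forall>w s. \<bar>f w s\<bar> \<le> C * inverse (1 + s^2)"
    using C by (meson mult_left_mono order_trans)
  with C(1) show ?thesis by blast
qed

lemma param_symbol_0_integrable:
  assumes "param_symbol 0 k f" "k \<le> -2"
  shows "integrable lborel (f w)"
proof -
  obtain C where "\<forall>w s. \<bar>f w s\<bar> \<le> C * inverse (1 + s^2)"
    using param_symbol_0_le_inverse_1_plus_square[OF assms] by blast
  then have "AE s in lborel. norm (f w s) \<le> norm (C * inverse (1 + s^2))"
    by (auto intro: order_trans[OF _ abs_ge_self])
  moreover have "f w \<in> borel_measurable lborel"
    using assms(1) unfolding param_symbol.simps(1) by simp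
  moreover have "integrable lborel (\<lambda>s. C * inverse (1 + s^2))"
    using lborel_integrable_inverse_1_plus_square by simp
  ultimately show ?thesis
    using Bochner_Integration.integrable_bound by blast
qed

lemma finite_uniform_bound:
  fixes G :: "'b \<Rightarrow> real"
  assumes "\<forall>a\<in>A. \<exists>C\<ge>0. \<forall>w s. F a w s \<le> C * G s" "finite A" "\<forall>s. G s \<ge> 0"
  shows "\<exists>C\<ge>0. \<forall>a\<in>A. \<forall>w s. F a w s \<le> C * G s"
  using assms(2,1,3)
proof (induction A rule: finite_induct)
  case empty
  then show ?case by auto
next
  case (insert a A)
  then obtain C D where C: "C \<ge> 0" "\<forall>w s. F a w s \<le> C * G s"
    and D: "D \<ge> 0" "\<forall>b\<in>A. \<forall>w s. F b w s \<le> D * G s"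
    by auto
  have "F b w s \<le> max C D * G s" if "b \<in> insert a A" for b w s
  proof -
    have "C * G s \<le> max C D * G s" "D * G s \<le> max C D * G s"
      using insert.prems(2) by (simp_all add: mult_right_mono)
    moreover have "F a w s \<le> C * G s" "b \<in> A \<Longrightarrow> F b w s \<le> D * G s" using C D by auto
    ultimately show ?thesis using that by (auto intro: order_trans)
  qed
  then show ?case using C D by (intro exI[of _ "max C D"]) auto
qed

lemma param_symbol_second_wpartial_bound:
  fixes g :: "'a::euclidean_space \<times> 'b::euclidean_space \<Rightarrow> real \<Rightarrow> real"
  assumes g: "param_symbol 2 k g" and "k \<le> -2"
  shows "\<exists>M\<ge>0. \<forall>b\<in>Basis. \<forall>c\<in>Basis. \<forall>w s.
    \<bar>wpartial c (wpartial b g) w s\<bar> \<le> M * inverse (1 + s^2)"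
proof -
  have "\<forall>bc\<in>Basis \<times> Basis. \<exists>C\<ge>0. \<forall>w s.
      \<bar>wpartial (snd bc) (wpartial (fst bc) g) w s\<bar> \<le> C * inverse (1 + s^2)"
  proof
    fix bc :: "('a \<times> 'b) \<times> ('a \<times> 'b)" assume "bc \<in> Basis \<times> Basis"
    then have "param_symbol 0 (k - dual_deg (fst bc) - dual_deg (snd bc)) (wpartial (snd bc) (wpartial (fst bc) g))"
      using g by (auto simp: numeral_2_eq_2)
    moreover have "k - dual_deg (fst bc) - dual_deg (snd bc) \<le> -2"
      using \<open>k \<le> -2\<close> dual_deg_nonneg[of "fst bc"] dual_deg_nonneg[of "snd bc"] by linarith
    ultimately show "\<exists>C\<ge>0. \<forall>w s. \<bar>wpartial (snd bc) (wpartial (fst bc) g) w s\<bar> \<le> C * inverse (1 + s^2)"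
      by (rule param_symbol_0_le_inverse_1_plus_square)
  qed
  then have "\<exists>M\<ge>0. \<forall>bc\<in>Basis \<times> Basis. \<forall>w s.
      \<bar>wpartial (snd bc) (wpartial (fst bc) g) w s\<bar> \<le> M * inverse (1 + s^2)"
    by (rule finite_uniform_bound) simp_all
  then show ?thesis by fastforce
qed

lemma param_symbol_taylor_remainder:
  fixes g :: "'a::euclidean_space \<times> 'b::euclidean_space \<Rightarrow> real \<Rightarrow> real"
  assumes g: "param_symbol 2 k g" and "k \<le> -2"
  shows "\<exists>K\<ge>0. \<forall>w u s. \<bar>g (w + u) s - g w s - (\<Sum>b\<in>Basis. (u \<bullet> b) * wpartial b g w s)\<bar>
    \<le> K * inverse (1 + s^2) * (norm u)^2"
proof -
  obtain M where "M \<ge> 0"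
    and M: "\<forall>b\<in>Basis. \<forall>c\<in>Basis. \<forall>w s. \<bar>wpartial c (wpartial b g) w s\<bar> \<le> M * inverse (1 + s^2)"
    using param_symbol_second_wpartial_bound[OF assms] by blast
  have g1: "param_symbol 1 (k - dual_deg b) (wpartial b g)" if "b \<in> Basis" for b
    using g that by (simp add: numeral_2_eq_2)
  define K where "K = real DIM('a \<times> 'b) * (real DIM('a \<times> 'b) * M)"
  have "\<bar>g (w + u) s - g w s - (\<Sum>b\<in>Basis. (u \<bullet> b) * wpartial b g w s)\<bar>
      \<le> K * inverse (1 + s^2) * (norm u)^2" for w u s
  proof -
    have "\<bar>g (w + u) s - g w s - (\<Sum>b\<in>Basis. (u \<bullet> b) * dpartial b (\<lambda>x. g x s) w)\<bar>
        \<le> (real DIM('a \<times> 'b) * (real DIM('a \<times> 'b) * (M * inverse (1 + s^2)))) * (norm u)^2"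
    proof (rule taylor_remainder_dpartial_le)
      show "\<forall>x. (\<lambda>x. g x s) differentiable at x" using g by (simp add: numeral_2_eq_2)
      show "\<forall>b\<in>Basis. \<forall>x. dpartial b (\<lambda>x. g x s) differentiable at x"
        using g1 unfolding wpartial_def by simp
      show "\<forall>b\<in>Basis. \<forall>c\<in>Basis. \<forall>x. \<bar>dpartial c (dpartial b (\<lambda>x. g x s)) x\<bar> \<le> M * inverse (1 + s^2)"
        using M unfolding wpartial_def by simp
    qed
    then show ?thesis unfolding K_def wpartial_def by (simp only: mult.assoc)
  qed
  moreover have "K \<ge> 0" unfolding K_def using \<open>M \<ge> 0\<close> by simp
  ultimately show ?thesis by blast
qed

lemma param_symbol_integral_has_derivative:
  fixes g :: "'a::euclidean_space \<times> 'b::euclidean_space \<Rightarrow> real \<Rightarrow> real"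
  assumes g: "param_symbol 2 k g" and "k \<le> -2"
  shows "((\<lambda>w. LINT s|lborel. g w s) has_derivative
    (\<lambda>u. \<Sum>b\<in>Basis. (u \<bullet> b) * (LINT s|lborel. wpartial b g w s))) (at w)"
proof -
  obtain K where "K \<ge> 0" and K: "\<And>w u s. \<bar>g (w + u) s - g w s - (\<Sum>b\<in>Basis. (u \<bullet> b) * wpartial b g w s)\<bar>
      \<le> K * inverse (1 + s^2) * (norm u)^2"
    using param_symbol_taylor_remainder[OF assms] by blast
  define I where "I = (LINT s|lborel. inverse (1 + s^2 :: real))"
  have "I \<ge> 0" unfolding I_def by (rule integral_nonneg_AE) simp
  have int_g: "integrable lborel (g x)" for x
    using param_symbol_0_integrable[OF param_symbol_imp_0[OF g] \<open>k \<le> -2\<close>] .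
  have int_wpartial: "integrable lborel (wpartial b g x)" if "b \<in> Basis" for b x
  proof (rule param_symbol_0_integrable)
    show "param_symbol 0 (k - dual_deg b) (wpartial b g)"
      using g that by (simp add: numeral_2_eq_2 param_symbol_imp_0)
    show "k - dual_deg b \<le> -2" using \<open>k \<le> -2\<close> dual_deg_nonneg[of b] by linarith
  qed
  show ?thesis
  proof (rule has_derivative_of_quadratic_remainder[where K = "K * I"])
    show "K * I \<ge> 0" using \<open>K \<ge> 0\<close> \<open>I \<ge> 0\<close> by simp
    show "bounded_linear (\<lambda>u. \<Sum>b\<in>Basis. (u \<bullet> b) * (LINT s|lborel. wpartial b g w s))"
      by (intro bounded_linear_sum bounded_linear_mult_const bounded_linear_inner_left)
    fix u
    have "(LINT s|lborel. g (w + u) s) - (LINT s|lborel. g w s)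
        - (\<Sum>b\<in>Basis. (u \<bullet> b) * (LINT s|lborel. wpartial b g w s))
      = (LINT s|lborel. g (w + u) s - g w s - (\<Sum>b\<in>Basis. (u \<bullet> b) * wpartial b g w s))"
      using int_g int_wpartial by (simp add: Bochner_Integration.integral_diff Bochner_Integration.integral_sum)
    also have "norm \<dots> \<le> (LINT s|lborel. K * (norm u)^2 * inverse (1 + s^2))"
      using int_g int_wpartial K lborel_integrable_inverse_1_plus_square
      by (intro Bochner_Integration.integral_norm_bound_integral) (auto simp: mult_ac)
    also have "\<dots> = K * I * (norm u)^2" unfolding I_def by (simp add: mult_ac)
    finally show "norm ((LINT s|lborel. g (w + u) s) - (LINT s|lborel. g w s)
      - (\<Sum>b\<in>Basis. (u \<bullet> b) * (LINT s|lborel. wpartial b g w s))) \<le> K * I * (norm u)^2" .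
  qed
qed

lemma lborel_integral_inverse_add_square:
  fixes A :: real
  assumes "A > 0"
  shows "integrable lborel (\<lambda>s. inverse (A + s^2))" "(LINT s|lborel. inverse (A + s^2)) = pi / sqrt A"
proof -
  define c where "c = sqrt A"
  have c: "c > 0" "c^2 = A" using assms unfolding c_def by auto
  have scaled: "(\<lambda>x. inverse (A + (c * x)^2)) = (\<lambda>x. inverse A * inverse (1 + x^2))"
  proof
    fix x
    have "A + (c * x)^2 = A * (1 + x^2)" using c by (simp add: power_mult_distrib algebra_simps)
    then show "inverse (A + (c * x)^2) = inverse A * inverse (1 + x^2)"
      by (simp add: inverse_mult_distrib)
  qed
  have "integrable lborel (\<lambda>x. inverse A * inverse (1 + x^2))"
    using lborel_integrable_inverse_1_plus_square by simp
  then show "integrable lborel (\<lambda>s. inverse (A + s^2))"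
    using lborel_integrable_real_affine_iff[of c "\<lambda>s. inverse (A + s^2)" 0] c scaled by simp
  have "(LINT x|lborel. inverse (1 + x^2)) = (pi::real)"
    using LBINT_inverse_1_plus_square
    by (simp add: interval_lebesgue_integral_def set_lebesgue_integral_def einterval_iff)
  moreover have "(LINT s|lborel. inverse (A + s^2)) = \<bar>c\<bar> *\<^sub>R (LINT x|lborel. inverse (A + (0 + c * x)^2))"
    by (rule lborel_integral_real_affine) (use c in simp)
  ultimately have "(LINT s|lborel. inverse (A + s^2)) = c * (inverse A * pi)"
    using c by (simp add: scaled del: inverse_eq_divide)
  also have "\<dots> = pi / sqrt A" using c unfolding c_def by (simp add: field_simps)
  finally show "(LINT s|lborel. inverse (A + s^2)) = pi / sqrt A" .
qed

lemma bracket_powr_integral_le: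
  assumes "j \<ge> 0"
  shows "integrable lborel (\<lambda>s. bracket w s powr (-2 - j))"
    and "(LINT s|lborel. bracket w s powr (-2 - j)) \<le> pi * sqrt (1 + (norm (snd w))^2) powr (-1 - j)"
proof -
  define A where "A = 1 + (norm (snd w))^2"
  have "A \<ge> 1" unfolding A_def by simp
  have bound: "bracket w s powr (-2 - j) \<le> sqrt A powr (-j) * inverse (A + s^2)" for s
  proof -
    have squared: "(bracket w s)^2 = A + s^2" unfolding A_def bracket_squared by simp
    have "bracket w s powr (-2 - j) = bracket w s powr (-2) * bracket w s powr (-j)"
      by (simp add: powr_add[symmetric])
    also have "bracket w s powr (-2) = inverse (A + s^2)"
      using bracket_powr_minus_2[of w s] squared by simp
    also have "bracket w s powr (-j) \<le> sqrt A powr (-j)"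
    proof (rule powr_mono2')
      have "sqrt A \<le> sqrt ((bracket w s)^2)" using squared by simp
      then show "sqrt A \<le> bracket w s" using bracket_pos[of w s] by simp
    qed (use \<open>j \<ge> 0\<close> \<open>A \<ge> 1\<close> in auto)
    then have "inverse (A + s^2) * bracket w s powr (-j) \<le> inverse (A + s^2) * sqrt A powr (-j)"
      using \<open>A \<ge> 1\<close> by (intro mult_left_mono) (auto simp: add_pos_nonneg)
    finally show ?thesis by (simp add: mult.commute)
  qed
  have int_bound: "integrable lborel (\<lambda>s. sqrt A powr (-j) * inverse (A + s^2))"
    using lborel_integral_inverse_add_square(1)[of A] \<open>A \<ge> 1\<close> by simp
  have "(\<lambda>s. bracket w s powr (-2 - j)) \<in> borel_measurable borel"
    unfolding bracket_def by measurable
  then show int: "integrable lborel (\<lambda>s. bracket w s powr (-2 - j))"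
    using bound by (intro Bochner_Integration.integrable_bound[OF int_bound])
      (auto intro: order_trans[OF _ abs_ge_self])
  have "(LINT s|lborel. bracket w s powr (-2 - j)) \<le> (LINT s|lborel. sqrt A powr (-j) * inverse (A + s^2))"
    using bound by (intro integral_mono[OF int int_bound])
  also have "\<dots> = sqrt A powr (-j) * (pi / sqrt A)"
    using lborel_integral_inverse_add_square(2)[of A] \<open>A \<ge> 1\<close> by simp
  also have "\<dots> = pi * sqrt A powr (-1 - j)"
    using \<open>A \<ge> 1\<close> by (simp add: powr_diff powr_minus divide_inverse mult_ac)
  finally show "(LINT s|lborel. bracket w s powr (-2 - j)) \<le> pi * sqrt (1 + (norm (snd w))^2) powr (-1 - j)"
    unfolding A_def .
qed

lemma sqrt_1_plus_square_ge:
  fixes t :: real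
  assumes "t \<ge> 0"
  shows "(1 + t) / sqrt 2 \<le> sqrt (1 + t^2)"
proof -
  have "(1 + t)^2 \<le> 2 * (1 + t^2)"
    using zero_le_power2[of "1 - t"] by (simp add: power2_eq_square algebra_simps)
  then have "1 + t \<le> sqrt 2 * sqrt (1 + t^2)"
    using assms real_sqrt_le_mono by (fastforce simp: real_sqrt_mult[symmetric])
  then show ?thesis by (simp add: divide_le_eq mult.commute)
qed

lemma bracket_powr_integral_le_dual:
  assumes "j \<ge> 0"
  shows "(LINT s|lborel. bracket w s powr (-2 - j)) \<le> pi * sqrt 2 powr (1 + j) * (1 + norm (snd w)) powr (-1 - j)"
proof -
  define t where "t = norm (snd w)"
  have "t \<ge> 0" unfolding t_def by simp
  have "sqrt (1 + t^2) powr (-1 - j) \<le> ((1 + t) / sqrt 2) powr (-1 - j)"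
    using sqrt_1_plus_square_ge[OF \<open>t \<ge> 0\<close>] \<open>j \<ge> 0\<close> \<open>t \<ge> 0\<close> by (intro powr_mono2') auto
  also have "\<dots> = sqrt 2 powr (1 + j) * (1 + t) powr (-1 - j)"
  proof -
    have "sqrt 2 powr (-1 - j) = inverse (sqrt 2 powr (1 + j))"
      using powr_minus[of "sqrt 2" "1 + j"] by simp
    moreover have "((1 + t) / sqrt 2) powr (-1 - j) = (1 + t) powr (-1 - j) / sqrt 2 powr (-1 - j)"
      by (rule powr_divide)
    ultimately show ?thesis by (simp add: divide_inverse mult.commute)
  qed
  finally show ?thesis
    using bracket_powr_integral_le(2)[OF assms, of w] pi_gt_zero unfolding t_def
    by (smt (verit, best) mult.assoc mult_left_mono)
qed

fun iter_wpartial :: "('a::euclidean_space \<times> 'b::euclidean_space) list \<Rightarrow> ('a \<times> 'b \<Rightarrow> real \<Rightarrow> real) \<Rightarrow> 'a \<times> 'b \<Rightarrow> real \<Rightarrow> real" where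
  "iter_wpartial [] f = f"
| "iter_wpartial (v # vs) f = wpartial v (iter_wpartial vs f)"

definition dual_count :: "('a::euclidean_space \<times> 'b::euclidean_space) list \<Rightarrow> real" where
  "dual_count vs = real (length (filter (\<lambda>v. fst v = 0) vs))"

lemma dual_count_Cons: "dual_count (v # vs) = dual_count vs + dual_deg v"
  unfolding dual_count_def dual_deg_def by simp

lemma param_symbol_iter_wpartial:
  "set vs \<subseteq> Basis \<Longrightarrow> param_symbol (n + length vs) k f \<Longrightarrow> param_symbol n (k - dual_count vs) (iter_wpartial vs f)"
proof (induction vs arbitrary: n)
  case Nil
  then show ?case by (simp add: dual_count_def)
next
  case (Cons v vs)
  have "param_symbol (Suc n) (k - dual_count vs) (iter_wpartial vs f)"
    using Cons.IH[of "Suc n"] Cons.prems by simp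
  then show ?case using Cons.prems(1) by (simp add: dual_count_Cons algebra_simps)
qed

lemma iter_partial_integral:
  fixes f :: "'a::euclidean_space \<times> 'b::euclidean_space \<Rightarrow> real \<Rightarrow> real"
  assumes f: "\<And>n. param_symbol n (-2) f" and "set vs \<subseteq> Basis"
  shows "iter_partial vs (\<lambda>w. LINT s|lborel. f w s) = (\<lambda>w. LINT s|lborel. iter_wpartial vs f w s)"
  using \<open>set vs \<subseteq> Basis\<close>
proof (induction vs)
  case Nil
  then show ?case by simp
next
  case (Cons v vs)
  have v: "v \<in> Basis" and vs: "set vs \<subseteq> Basis" using Cons.prems by auto
  have "param_symbol 2 (-2 - dual_count vs) (iter_wpartial vs f)"
    using param_symbol_iter_wpartial[OF vs f] .
  moreover have "-2 - dual_count vs \<le> -2" by (simp add: dual_count_def)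
  ultimately have "((\<lambda>w. LINT s|lborel. iter_wpartial vs f w s) has_derivative
      (\<lambda>u. \<Sum>b\<in>Basis. (u \<bullet> b) * (LINT s|lborel. wpartial b (iter_wpartial vs f) w s))) (at w)" for w
    by (rule param_symbol_integral_has_derivative)
  from dpartial_eq_derivative[OF this, of v] show ?case
    using Cons.IH[OF vs] by (simp add: sum_Basis_inner_mult[OF v])
qed

lemma param_symbol_0_integral_bound:
  assumes h: "param_symbol 0 (-2 - j) h" and "j \<ge> 0"
  shows "\<exists>C. \<forall>w. \<bar>LINT s|lborel. h w s\<bar> \<le> C * (1 + norm (snd w)) powr (-1 - j)"
proof -
  obtain C where "C \<ge> 0" and C: "\<forall>w s. \<bar>h w s\<bar> \<le> C * bracket w s powr (-2 - j)"
    using param_symbol_0_bound[OF h] by blast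
  have "\<bar>LINT s|lborel. h w s\<bar> \<le> (C * (pi * sqrt 2 powr (1 + j))) * (1 + norm (snd w)) powr (-1 - j)" for w
  proof -
    have "norm (LINT s|lborel. h w s) \<le> (LINT s|lborel. C * bracket w s powr (-2 - j))"
      using param_symbol_0_integrable[OF h, of w] bracket_powr_integral_le(1)[OF \<open>j \<ge> 0\<close>, of w] C \<open>j \<ge> 0\<close>
      by (intro Bochner_Integration.integral_norm_bound_integral) auto
    then have "\<bar>LINT s|lborel. h w s\<bar> \<le> C * (LINT s|lborel. bracket w s powr (-2 - j))"
      by simp
    also have "\<dots> \<le> C * (pi * sqrt 2 powr (1 + j) * (1 + norm (snd w)) powr (-1 - j))"
      by (rule mult_left_mono[OF bracket_powr_integral_le_dual[OF \<open>j \<ge> 0\<close>] \<open>C \<ge> 0\<close>])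
    finally show ?thesis by (simp add: mult_ac)
  qed
  then show ?thesis by blast
qed

lemma symbol_class_integral:
  fixes f :: "'a::euclidean_space \<times> 'a \<Rightarrow> real \<Rightarrow> real"
  assumes f: "\<And>n. param_symbol n (-2) f"
  shows "symbol_class (-1) (\<lambda>z \<zeta>. LINT s|lborel. f (z, \<zeta>) s)"
  unfolding symbol_class_def
proof (intro conjI allI impI)
  show "smooth_fun (\<lambda>w. LINT s|lborel. f (fst w, snd w) s)"
    unfolding smooth_fun_def
  proof (intro allI impI)
    fix vs :: "('a \<times> 'a) list" and w assume vs: "set vs \<subseteq> Basis"
    have "param_symbol 2 (-2 - dual_count vs) (iter_wpartial vs f)"
      using param_symbol_iter_wpartial[OF vs f] .
    moreover have "-2 - dual_count vs \<le> -2" by (simp add: dual_count_def)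
    ultimately have "(\<lambda>w. LINT s|lborel. iter_wpartial vs f w s) differentiable (at w)"
      by (rule param_symbol_integral_has_derivative[THEN differentiableI])
    then show "iter_partial vs (\<lambda>w. LINT s|lborel. f (fst w, snd w) s) differentiable (at w)"
      using iter_partial_integral[OF f vs] by simp
  qed
  fix vs :: "('a \<times> 'a) list" assume vs: "set vs \<subseteq> Basis"
  have "param_symbol 0 (-2 - dual_count vs) (iter_wpartial vs f)"
    using param_symbol_iter_wpartial[OF vs f] .
  then obtain C where C: "\<forall>w. \<bar>LINT s|lborel. iter_wpartial vs f w s\<bar> \<le> C * (1 + norm (snd w)) powr (-1 - dual_count vs)"
    using param_symbol_0_integral_bound by (metis dual_count_def of_nat_0_le_iff)
  show "\<exists>C. \<forall>z \<zeta>. \<bar>iter_partial vs (\<lambda>w. LINT s|lborel. f (fst w, snd w) s) (z, \<zeta>)\<bar>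
      \<le> C * (1 + norm \<zeta>) powr (-1 - real (length (filter (\<lambda>v. fst v = 0) vs)))"
  proof (intro exI allI)
    fix z \<zeta>
    show "\<bar>iter_partial vs (\<lambda>w. LINT s|lborel. f (fst w, snd w) s) (z, \<zeta>)\<bar>
      \<le> C * (1 + norm \<zeta>) powr (-1 - real (length (filter (\<lambda>v. fst v = 0) vs)))"
      using C[rule_format, of "(z, \<zeta>)"] iter_partial_integral[OF f vs] by (simp add: dual_count_def)
  qed
qed

lemma param_symbol_cutoff_quotient:
  fixes P W :: "'a::euclidean_space \<times> 'b::euclidean_space \<Rightarrow> real \<Rightarrow> real"
  assumes \<theta>: "smooth_fun \<theta>" "\<epsilon> > 0" "\<forall>\<sigma>. \<sigma> \<le> \<epsilon> \<longrightarrow> \<theta> \<sigma> = 0"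
    and P: "\<And>n. param_symbol n 2 P" and W: "\<And>n. param_symbol n 2 W"
    and "c > 0" and W_lower: "\<forall>w s. W w s \<ge> c * (bracket w s)^2"
    and P_le_W: "\<forall>w s. \<bar>P w s\<bar> \<le> W w s"
  shows "param_symbol n (-2) (\<lambda>w s. \<theta> (P w s / W w s) / P w s)"
proof -
  have W_pos: "W w s > 0" for w s
    using W_lower \<open>c > 0\<close> bracket_pos[of w s] by (metis mult_pos_pos zero_less_power less_le_trans)
  have inv_W: "param_symbol n (-2) (\<lambda>w s. inverse (W w s))" for n
    using param_symbol_inverse[OF \<open>c > 0\<close> W_lower W] .
  define r where "r w s = P w s * inverse (W w s)" for w s
  have "param_symbol n 0 r" for n
    using param_symbol_mult[OF P inv_W] unfolding r_def by simp
  moreover have "\<forall>w s. \<bar>r w s\<bar> \<le> 1"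
  proof (intro allI)
    fix w s
    show "\<bar>r w s\<bar> \<le> 1"
      using P_le_W W_pos[of w s] by (simp add: r_def abs_mult divide_le_eq_1 field_simps)
  qed
  ultimately have "param_symbol n 0 (\<lambda>w s. \<theta> (r w s) / r w s)"
    by (intro param_symbol_compose[OF times_differentiable_on_cutoff_quotient[OF \<theta>]])
  from param_symbol_mult[OF this inv_W]
  have "param_symbol n (-2) (\<lambda>w s. \<theta> (r w s) / r w s * inverse (W w s))" by simp
  moreover have "\<theta> (r w s) / r w s * inverse (W w s) = \<theta> (P w s / W w s) / P w s" for w s
    using W_pos[of w s] by (cases "P w s = 0") (simp_all add: r_def field_simps)
  ultimately show ?thesis by simp
qed

type_synonym 'm phase_point = "(real \<times> (real^'m)) \<times> (real \<times> (real^'m))"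

lemma param_symbol_metric_sq:
  fixes \<alpha> :: "'m::finite \<Rightarrow> 'm \<Rightarrow> (real^'m) \<times> real \<Rightarrow> real"
  assumes "\<forall>i j. smooth_fun (\<alpha> i j)" "\<forall>i j. bounded_derivs (\<alpha> i j)"
  shows "param_symbol n 2
    (\<lambda>(w :: 'm phase_point) s. metric_sq \<alpha> (snd (fst w), 0) (snd (snd w)))"
proof -
  define L :: "'m phase_point \<Rightarrow> (real^'m) \<times> real" where
    "L w = (snd (fst w), 0)" for w
  have "linear L" unfolding L_def by (auto intro!: linearI simp: algebra_simps)
  moreover have "\<forall>v\<in>Basis. L v = 0 \<or> (fst v \<noteq> 0 \<and> L v \<in> Basis)"
    unfolding L_def by (auto simp: Basis_prod_def zero_prod_def)
  ultimately have coeff: "param_symbol n 0 (\<lambda>w s. \<alpha> i j (L w))" for i j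
    using assms by (intro param_symbol_compose_linear) simp_all
  have "param_symbol n (0 + 1 + 1)
      (\<lambda>w s. \<alpha> i j (L w) * (snd w \<bullet> (0, axis i 1)) * (snd w \<bullet> (0, axis j 1)))" for i j
    by (rule param_symbol_mult[OF param_symbol_mult[OF coeff param_symbol_inner_dual] param_symbol_inner_dual])
  then have "param_symbol n 2
      (\<lambda>w s. \<Sum>i\<in>UNIV. \<Sum>j\<in>UNIV. \<alpha> i j (L w) * (snd w \<bullet> (0, axis i 1)) * (snd w \<bullet> (0, axis j 1)))"
    by (intro param_symbol_sum[OF finite] param_symbol_sum[OF finite]) simp
  moreover have "snd w \<bullet> (0, axis i 1) = snd (snd w) $ i" for w :: "'m phase_point" and i
    by (cases w) (auto simp: inner_Pair inner_axis)
  ultimately show ?thesis by (simp add: metric_sq_def L_def)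
qed

lemma param_symbol_boundary_quadratic:
  fixes \<alpha> :: "'m::finite \<Rightarrow> 'm \<Rightarrow> (real^'m) \<times> real \<Rightarrow> real"
  assumes "\<forall>i j. smooth_fun (\<alpha> i j)" "\<forall>i j. bounded_derivs (\<alpha> i j)"
  shows "param_symbol n 2 (\<lambda>(w :: 'm phase_point) s.
    a + s^2 + metric_sq \<alpha> (snd (fst w), 0) (snd (snd w)) + b * (fst (snd w))^2)"
proof -
  have \<tau>: "param_symbol n 1 (\<lambda>(w :: 'm phase_point) s. fst (snd w))"
  proof -
    have "(\<lambda>(w :: 'm phase_point) (s :: real). snd w \<bullet> (1, 0))
        = (\<lambda>w s. fst (snd w))"
      by (intro ext) (simp add: inner_Pair inner_prod_def)
    with param_symbol_inner_dual[where 'a = "real \<times> (real^'m)", of n "(1, 0)"] show ?thesis by metis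
  qed
  have const: "param_symbol n 2 (\<lambda>(w :: 'm phase_point) s. a)"
    by (rule param_symbol_mono[OF param_symbol_const]) simp
  have square: "param_symbol n 2 (\<lambda>(w :: 'm phase_point) s. s * s)"
    using param_symbol_mult[OF param_symbol_dual_var param_symbol_dual_var] by simp
  have \<tau>_square: "param_symbol n 2 (\<lambda>(w :: 'm phase_point) s. b * (fst (snd w) * fst (snd w)))"
    using param_symbol_scale[OF param_symbol_mult[OF \<tau> \<tau>], of b] by simp
  show ?thesis
    using param_symbol_add[OF param_symbol_add[OF param_symbol_add[OF const square]
          param_symbol_metric_sq[OF assms]] \<tau>_square]
    by (simp add: power2_eq_square)
qed

lemma boundary_weight_bounds:
  fixes \<alpha> :: "'m::finite \<Rightarrow> 'm \<Rightarrow> (real^'m) \<times> real \<Rightarrow> real"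
    and w :: "'m phase_point"
  assumes "c > 0" and ell: "\<forall>x \<xi>' \<xi>n. \<xi>n^2 + metric_sq \<alpha> x \<xi>' \<ge> c * (\<xi>n^2 + (norm \<xi>')^2)"
  defines "M \<equiv> metric_sq \<alpha> (snd (fst w), 0) (snd (snd w))"
  shows "1 + s^2 + M + (fst (snd w))^2 \<ge> min 1 c * (bracket w s)^2"
    and "\<bar>s^2 + M - (fst (snd w))^2\<bar> \<le> 1 + s^2 + M + (fst (snd w))^2"
proof -
  have M: "M \<ge> c * (norm (snd (snd w)))^2"
    using ell[rule_format, of 0 "snd (snd w)" "(snd (fst w), 0)"] unfolding M_def by simp
  have "(bracket w s)^2 = 1 + s^2 + (fst (snd w))^2 + (norm (snd (snd w)))^2"
    unfolding bracket_squared by (cases "snd w") (simp add: norm_Pair)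
  moreover have "min 1 c * x \<le> x" "min 1 c * y \<le> c * y" if "x \<ge> 0" "y \<ge> 0" for x y
    using mult_right_mono[OF min.cobounded1[of 1 c] that(1)] mult_right_mono[OF min.cobounded2[of 1 c] that(2)]
    by simp_all
  ultimately show "1 + s^2 + M + (fst (snd w))^2 \<ge> min 1 c * (bracket w s)^2"
    using M by (smt (verit) distrib_left zero_le_power2)
  show "\<bar>s^2 + M - (fst (snd w))^2\<bar> \<le> 1 + s^2 + M + (fst (snd w))^2"
    using M \<open>c > 0\<close> by (smt (verit) mult_nonneg_nonneg zero_le_power2)
qed

theorem mainTheorem6:
  fixes \<alpha> :: "'m::finite \<Rightarrow> 'm \<Rightarrow> ((real^'m) \<times> real) \<Rightarrow> real"
    and \<theta> :: "real \<Rightarrow> real"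
  assumes sym: "\<forall>i j. \<alpha> i j = \<alpha> j i"
    and smooth: "\<forall>i j. smooth_fun (\<alpha> i j)"
    and bdd: "\<forall>i j. bounded_derivs (\<alpha> i j)"
    and ell: "\<exists>c>0. \<forall>x \<xi>' \<xi>n. \<xi>n^2 + metric_sq \<alpha> x \<xi>' \<ge> c * (\<xi>n^2 + (norm \<xi>')^2)"
    and \<theta>_smooth: "smooth_fun \<theta>"
    and \<theta>_range: "\<forall>\<sigma>. 0 \<le> \<theta> \<sigma> \<and> \<theta> \<sigma> \<le> 1"
    and \<theta>_one: "\<forall>\<sigma>. \<sigma> \<ge> 1/5 \<longrightarrow> \<theta> \<sigma> = 1"
    and \<theta>_zero: "\<forall>\<sigma>. \<sigma> \<le> 1/10 \<longrightarrow> \<theta> \<sigma> = 0"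
  shows "symbol_class (-1)
           (\<lambda>(z :: real \<times> (real^'m)) (\<zeta> :: real \<times> (real^'m)). q_T \<alpha> \<theta> (snd z) (fst \<zeta>) (snd \<zeta>))"
proof -
  obtain c where "c > 0" and c: "\<forall>x \<xi>' \<xi>n. \<xi>n^2 + metric_sq \<alpha> x \<xi>' \<ge> c * (\<xi>n^2 + (norm \<xi>')^2)"
    using ell by blast
  define P W :: "'m phase_point \<Rightarrow> real \<Rightarrow> real" where
    "P w s = p_bdry \<alpha> (snd (fst w)) (fst (snd w)) (snd (snd w)) s" and
    "W w s = 1 + s^2 + metric_sq \<alpha> (snd (fst w), 0) (snd (snd w)) + (fst (snd w))^2" for w s
  have "param_symbol n (-2) (\<lambda>w s. \<theta> (P w s / W w s) / P w s)" for n
  proof (rule param_symbol_cutoff_quotient[OF \<theta>_smooth _ \<theta>_zero])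
    show "param_symbol n 2 P" for n
      using param_symbol_boundary_quadratic[OF smooth bdd, of n 0 "-1"] by (simp add: P_def[abs_def] p_bdry_def)
    show "param_symbol n 2 W" for n
      using param_symbol_boundary_quadratic[OF smooth bdd, of n 1 1] by (simp add: W_def[abs_def])
    show "\<forall>w s. W w s \<ge> min 1 c * (bracket w s)^2" "\<forall>w s. \<bar>P w s\<bar> \<le> W w s"
      using boundary_weight_bounds[OF \<open>c > 0\<close> c] by (simp_all add: P_def W_def p_bdry_def)
  qed (use \<open>c > 0\<close> in simp_all)
  from symbol_class_integral[OF this] show ?thesis
    by (simp add: q_T_def P_def W_def)
qed

end
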